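(* Let $L\subseteq\mathbb{Z}^{(\mathbb{N})}$ be a $\mathrm{Sym}$-invariant lattice. For $\mathbf{u}=(u_i)_{i\in\mathbb{N}}\in\mathbb{Z}^{(\mathbb{N})}$ set $s(\mathbf{u})=\sum_{i\in\mathbb{N}}u_i$, and let $s_L=\gcd(s(\mathbf{u})\mid\mathbf{u}\in L)$. Then (i) $s_L\mathbf{e}_1\in L$; (ii) if there exists $\mathbf{u}\in L$ with $s(\mathbf{u})\neq0$, then $s_L\mathbf{e}_1$ belongs to the Graver basis of $L$.
   Context: $\mathbb{N}=\{1,2,\dots\}$. $\mathbb{Z}^{(\mathbb{N})}$ is the group of finitely supported integer sequences with standard basis $\mathbf{e}_i$; a lattice is a subgroup. $\mathrm{Sym}$ is the group of permutations of $\mathbb{N}$ fixing all but finitely many points, acting by $\sigma(\mathbf{e}_i)=\mathbf{e}_{\sigma(i)}$; $L$ is $\mathrm{Sym}$-invariant if $\sigma(L)\subseteq L$ for all $\sigma$. $\mathbf{u}\sqsubseteq\mathbf{v}$ iff $u_iv_i\ge0$ and $|u_i|\le|v_i|$ for all $i$; the Graver basis of $L$ is the set of $\sqsubseteq$-minimal elements of $L\setminus\{\mathbf{0}\}$. *)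

theory Defs
  imports Main
begin

text \<open>Elements of Z^(N) with N = {1,2,...}: integer sequences indexed by nat,
  finitely supported, with the unused index 0 forced to be 0.\<close>
definition ZN :: "(nat \<Rightarrow> int) set" where
  "ZN = {u. finite {i. u i \<noteq> 0} \<and> u 0 = 0}"

definition unitvec :: "nat \<Rightarrow> nat \<Rightarrow> int" ("\<e>") where
  "\<e> i = (\<lambda>j. if j = i then 1 else 0)"

definition lattice :: "(nat \<Rightarrow> int) set \<Rightarrow> bool" where
  "lattice L \<longleftrightarrow> L \<subseteq> ZN \<and> (\<lambda>_. 0) \<in> L \<and>
     (\<forall>u\<in>L. \<forall>v\<in>L. (\<lambda>i. u i + v i) \<in> L) \<and> (\<forall>u\<in>L. (\<lambda>i. - u i) \<in> L)"

definition Sym :: "(nat \<Rightarrow> nat) set" where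
  "Sym = {\<sigma>. bij \<sigma> \<and> finite {i. \<sigma> i \<noteq> i} \<and> \<sigma> 0 = 0}"

text \<open>Action sigma(e_i) = e_(sigma i), extended linearly: (sigma u)_(sigma i) = u_i.\<close>
definition perm_act :: "(nat \<Rightarrow> nat) \<Rightarrow> (nat \<Rightarrow> int) \<Rightarrow> (nat \<Rightarrow> int)" where
  "perm_act \<sigma> u = (\<lambda>j. u (inv \<sigma> j))"

definition Sym_invariant :: "(nat \<Rightarrow> int) set \<Rightarrow> bool" where
  "Sym_invariant L \<longleftrightarrow> (\<forall>\<sigma>\<in>Sym. perm_act \<sigma> ` L \<subseteq> L)"

definition conf_le :: "(nat \<Rightarrow> int) \<Rightarrow> (nat \<Rightarrow> int) \<Rightarrow> bool" (infix "\<sqsubseteq>" 50) where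
  "u \<sqsubseteq> v \<longleftrightarrow> (\<forall>i. u i * v i \<ge> 0 \<and> \<bar>u i\<bar> \<le> \<bar>v i\<bar>)"

definition graver_basis :: "(nat \<Rightarrow> int) set \<Rightarrow> (nat \<Rightarrow> int) set" where
  "graver_basis L = {u \<in> L - {\<lambda>_. 0}. \<forall>v \<in> L - {\<lambda>_. 0}. v \<sqsubseteq> u \<longrightarrow> v = u}"

definition coord_sum :: "(nat \<Rightarrow> int) \<Rightarrow> int" where
  "coord_sum u = (\<Sum>i\<in>{i. u i \<noteq> 0}. u i)"

definition s_lat :: "(nat \<Rightarrow> int) set \<Rightarrow> int" where
  "s_lat L = Gcd (coord_sum ` L)"

end

theory Submission
  imports Defs "HOL-Combinatorics.Transposition"
begin

text \<open>For \<open>u \<in> L\<close> and a coordinate \<open>k\<close>, pick a coordinate \<open>m\<close> outside the support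
  of \<open>u\<close>: then \<open>u - (k m)u = u\<^sub>k (e\<^sub>k - e\<^sub>m)\<close>, and applying \<open>(m 1)\<close> puts
  \<open>u\<^sub>k (e\<^sub>k - e\<^sub>1)\<close> into \<open>L\<close>. Subtracting these vectors for all \<open>k\<close> in the support
  leaves \<open>s(u) e\<^sub>1\<close>, so the coordinate sums of \<open>L\<close> are exactly the \<open>c\<close> with
  \<open>c e\<^sub>1 \<in> L\<close>. This is an ideal of \<open>\<int>\<close>, hence contains its gcd \<open>s\<^sub>L\<close>, which divides
  all its elements; a nonzero \<open>v \<sqsubseteq> s\<^sub>L e\<^sub>1\<close> in \<open>L\<close> is some \<open>v\<^sub>1 e\<^sub>1\<close> with
  \<open>0 < v\<^sub>1 \<le> s\<^sub>L\<close> and \<open>s\<^sub>L dvd v\<^sub>1\<close>, so \<open>v = s\<^sub>L e\<^sub>1\<close>.\<close>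

lemma lattice_zero: "lattice L \<Longrightarrow> (\<lambda>_. 0) \<in> L"
  by (simp add: lattice_def)

lemma lattice_add: "lattice L \<Longrightarrow> u \<in> L \<Longrightarrow> v \<in> L \<Longrightarrow> (\<lambda>i. u i + v i) \<in> L"
  by (simp add: lattice_def)

lemma lattice_uminus: "lattice L \<Longrightarrow> u \<in> L \<Longrightarrow> (\<lambda>i. - u i) \<in> L"
  by (simp add: lattice_def)

lemma lattice_diff: "lattice L \<Longrightarrow> u \<in> L \<Longrightarrow> v \<in> L \<Longrightarrow> (\<lambda>i. u i - v i) \<in> L"
  using lattice_add[of L u "\<lambda>i. - v i"] lattice_uminus[of L v] by simp

lemma lattice_smult:
  assumes "lattice L" "u \<in> L"
  shows "(\<lambda>i. c * u i) \<in> L"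
proof -
  have nat_mult: "(\<lambda>i. int n * u i) \<in> L" for n
    by (induction n) (simp_all add: distrib_right lattice_zero lattice_add assms)
  show ?thesis
  proof (cases "c \<ge> 0")
    case True
    then show ?thesis using nat_mult[of "nat c"] by simp
  next
    case False
    then show ?thesis using lattice_uminus[OF assms(1) nat_mult[of "nat (- c)"]] by simp
  qed
qed

lemma lattice_sum:
  assumes "lattice L" "finite S" "\<And>k. k \<in> S \<Longrightarrow> f k \<in> L"
  shows "(\<lambda>i. \<Sum>k\<in>S. f k i) \<in> L"
  using assms(2,3) by (induction S rule: finite_induct) (simp_all add: lattice_zero lattice_add assms(1))

lemma lattice_finite_support: "lattice L \<Longrightarrow> u \<in> L \<Longrightarrow> finite {i. u i \<noteq> 0}"
  by (auto simp: lattice_def ZN_def)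

lemma lattice_zero_at_0: "lattice L \<Longrightarrow> u \<in> L \<Longrightarrow> u 0 = 0"
  by (auto simp: lattice_def ZN_def)

lemma transpose_in_Sym: "a \<noteq> 0 \<Longrightarrow> b \<noteq> 0 \<Longrightarrow> transpose a b \<in> Sym"
proof -
  assume "a \<noteq> 0" "b \<noteq> 0"
  have "{i. transpose a b i \<noteq> i} \<subseteq> {a, b}"
    by (auto simp: transpose_def)
  then have "finite {i. transpose a b i \<noteq> i}"
    by (rule finite_subset) simp
  with \<open>a \<noteq> 0\<close> \<open>b \<noteq> 0\<close> show ?thesis
    by (simp add: Sym_def)
qed

lemma Sym_invariant_transpose:
  assumes "Sym_invariant L" "a \<noteq> 0" "b \<noteq> 0" "u \<in> L"
  shows "(\<lambda>i. u (transpose a b i)) \<in> L"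
proof -
  have "perm_act (transpose a b) u \<in> L"
    using assms transpose_in_Sym[of a b] unfolding Sym_invariant_def by blast
  then show ?thesis by (simp add: perm_act_def)
qed

lemma Sym_invariant_unitvec_diff:
  assumes L: "lattice L" "Sym_invariant L" and u: "u \<in> L" and "k \<noteq> 0"
  shows "(\<lambda>i. u k * (\<e> k i - \<e> 1 i)) \<in> L"
proof (cases "k = 1")
  case True
  then show ?thesis using lattice_zero[OF L(1)] by simp
next
  case False
  have "finite ({i. u i \<noteq> 0} \<union> {0, 1, k})"
    using lattice_finite_support[OF L(1) u] by simp
  then obtain m where m: "m \<notin> {i. u i \<noteq> 0} \<union> {0, 1, k}"
    using ex_new_if_finite[OF infinite_UNIV_nat] by blast
  define w where "w = (\<lambda>i. u i - u (transpose k m i))"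
  have "w \<in> L"
    unfolding w_def using m \<open>k \<noteq> 0\<close>
    by (intro lattice_diff[OF L(1) u] Sym_invariant_transpose[OF L(2) _ _ u]) auto
  then have "(\<lambda>i. w (transpose m 1 i)) \<in> L"
    using m by (intro Sym_invariant_transpose[OF L(2)]) auto
  also have "(\<lambda>i. w (transpose m 1 i)) = (\<lambda>i. u k * (\<e> k i - \<e> 1 i))"
  proof
    fix i
    have "u m = 0" "m \<noteq> k" "m \<noteq> 1" using m by auto
    with False show "w (transpose m 1 i) = u k * (\<e> k i - \<e> 1 i)"
      unfolding w_def unitvec_def transpose_def by auto
  qed
  finally show ?thesis .
qed

lemma coord_sum_eq_sum: "finite S \<Longrightarrow> {i. u i \<noteq> 0} \<subseteq> S \<Longrightarrow> coord_sum u = sum u S"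
  unfolding coord_sum_def by (rule sum.mono_neutral_left) auto

lemma coord_sum_smult_unitvec [simp]: "coord_sum (\<lambda>i. c * \<e> k i) = c"
proof -
  have "coord_sum (\<lambda>i. c * \<e> k i) = (\<Sum>i\<in>{k}. c * \<e> k i)"
    by (rule coord_sum_eq_sum) (auto simp: unitvec_def)
  then show ?thesis by (simp add: unitvec_def)
qed

lemma Sym_invariant_coord_sum_unitvec_mem:
  assumes L: "lattice L" "Sym_invariant L" and u: "u \<in> L"
  shows "(\<lambda>i. coord_sum u * \<e> 1 i) \<in> L"
proof -
  define S where "S = {i. u i \<noteq> 0}"
  have "k \<noteq> 0" if "k \<in> S" for k
    using that lattice_zero_at_0[OF L(1) u] unfolding S_def by (metis mem_Collect_eq)
  then have "(\<lambda>i. \<Sum>k\<in>S. u k * (\<e> k i - \<e> 1 i)) \<in> L"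
    using lattice_finite_support[OF L(1) u]
    by (intro lattice_sum Sym_invariant_unitvec_diff[OF L u]) (simp_all add: S_def L(1))
  then have "(\<lambda>i. u i - (\<Sum>k\<in>S. u k * (\<e> k i - \<e> 1 i))) \<in> L"
    by (rule lattice_diff[OF L(1) u])
  also have "(\<lambda>i. u i - (\<Sum>k\<in>S. u k * (\<e> k i - \<e> 1 i))) = (\<lambda>i. coord_sum u * \<e> 1 i)"
  proof
    fix i
    have "(\<Sum>k\<in>S. u k * \<e> k i) = (\<Sum>k\<in>S. if k = i then u k else 0)"
      by (rule sum.cong) (auto simp: unitvec_def)
    also have "\<dots> = u i"
      using lattice_finite_support[OF L(1) u] by (simp add: S_def)
    finally have "(\<Sum>k\<in>S. u k * \<e> k i) = u i" .
    moreover have "(\<Sum>k\<in>S. u k * \<e> 1 i) = coord_sum u * \<e> 1 i"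
      by (simp add: S_def coord_sum_def sum_distrib_right)
    ultimately show "u i - (\<Sum>k\<in>S. u k * (\<e> k i - \<e> 1 i)) = coord_sum u * \<e> 1 i"
      by (simp add: right_diff_distrib sum_subtractf)
  qed
  finally show ?thesis .
qed

lemma Sym_invariant_coord_sum_image:
  assumes "lattice L" "Sym_invariant L"
  shows "coord_sum ` L = {c. (\<lambda>i. c * \<e> 1 i) \<in> L}"
  using Sym_invariant_coord_sum_unitvec_mem[OF assms]
  by (auto simp: image_iff) (metis coord_sum_smult_unitvec)

lemma Gcd_mem_if_int_ideal:
  fixes M :: "int set"
  assumes "0 \<in> M"
    and add: "\<And>a b. a \<in> M \<Longrightarrow> b \<in> M \<Longrightarrow> a + b \<in> M"
    and mult: "\<And>c a. a \<in> M \<Longrightarrow> c * a \<in> M"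
  shows "Gcd M \<in> M"
proof (cases "M \<subseteq> {0}")
  case True
  then show ?thesis using assms(1) by (metis Gcd_0_iff)
next
  case False
  then obtain a where "a \<in> M" "a \<noteq> 0" by auto
  then have "\<bar>a\<bar> \<in> M"
    using mult[of a "sgn a"] by (metis abs_sgn mult.commute)
  with \<open>a \<noteq> 0\<close> have "\<exists>n::nat. n > 0 \<and> int n \<in> M"
    by (intro exI[of _ "nat \<bar>a\<bar>"]) simp
  then obtain n where n: "n > 0" "int n \<in> M" and least: "\<And>m. m < n \<Longrightarrow> m > 0 \<Longrightarrow> int m \<notin> M"
    unfolding exists_least_iff[of "\<lambda>n. n > 0 \<and> int n \<in> M"] by blast
  have dvd: "int n dvd b" if "b \<in> M" for b
  proof -
    have "b + (- (b div int n)) * int n \<in> M"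
      using add[OF that mult[OF n(2)]] .
    then have "b mod int n \<in> M"
      by (simp flip: minus_div_mult_eq_mod)
    moreover have "0 \<le> b mod int n" "b mod int n < int n"
      using n(1) by simp_all
    ultimately have "b mod int n = 0"
      using least[of "nat (b mod int n)"] by fastforce
    then show ?thesis by (simp add: dvd_eq_mod_eq_0)
  qed
  have "Gcd M = int n"
    by (rule Gcd_eqI) (use n dvd in auto)
  with n show ?thesis by simp
qed

lemma smult_unitvec_in_graver_basis:
  assumes mem: "(\<lambda>i. c * \<e> k i) \<in> L" and "c > 0"
    and min: "\<And>d. (\<lambda>i. d * \<e> k i) \<in> L \<Longrightarrow> c dvd d"
  shows "(\<lambda>i. c * \<e> k i) \<in> graver_basis L"
  unfolding graver_basis_def
proof (intro CollectI conjI ballI impI)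
  show "(\<lambda>i. c * \<e> k i) \<in> L - {\<lambda>_. 0}"
    using mem \<open>c > 0\<close> fun_cong[of "\<lambda>i. c * \<e> k i" "\<lambda>_. 0" k] by (auto simp: unitvec_def)
  fix v assume v: "v \<in> L - {\<lambda>_. 0}" and "v \<sqsubseteq> (\<lambda>i. c * \<e> k i)"
  then have le: "0 \<le> v i * (c * \<e> k i) \<and> \<bar>v i\<bar> \<le> \<bar>c * \<e> k i\<bar>" for i
    unfolding conf_le_def by blast
  have "v i = 0" if "i \<noteq> k" for i
    using le[of i] that by (simp add: unitvec_def)
  then have v_eq: "(\<lambda>i. v k * \<e> k i) = v"
    by (auto simp: fun_eq_iff unitvec_def)
  have bounds: "0 \<le> v k" "v k \<le> c"
    using le[of k] \<open>c > 0\<close> by (auto simp: unitvec_def zero_le_mult_iff)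
  have "v k \<noteq> 0"
    using v v_eq by auto
  moreover have "c dvd v k"
    using min v by (simp add: v_eq)
  ultimately have "v k = c"
    using bounds zdvd_imp_le by fastforce
  then show "v = (\<lambda>i. c * \<e> k i)"
    using v_eq by simp
qed

theorem corollary4p7:
  fixes L :: "(nat \<Rightarrow> int) set"
  assumes "lattice L" and "Sym_invariant L"
  shows "(\<lambda>i. s_lat L * \<e> 1 i) \<in> L \<and>
    ((\<exists>u\<in>L. coord_sum u \<noteq> 0) \<longrightarrow> (\<lambda>i. s_lat L * \<e> 1 i) \<in> graver_basis L)"
proof -
  let ?M = "{c. (\<lambda>i. c * \<e> 1 i) \<in> L}"
  have s_lat_eq: "s_lat L = Gcd ?M"
    using Sym_invariant_coord_sum_image[OF assms] by (simp add: s_lat_def)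
  have "Gcd ?M \<in> ?M"
  proof (rule Gcd_mem_if_int_ideal)
    show "0 \<in> ?M" using lattice_zero[OF assms(1)] by simp
    show "a + b \<in> ?M" if "a \<in> ?M" "b \<in> ?M" for a b
      using lattice_add[OF assms(1) that[simplified]] by (simp add: distrib_right)
    show "c * a \<in> ?M" if "a \<in> ?M" for c a
      using lattice_smult[OF assms(1) that[simplified], of c] by (simp add: mult.assoc)
  qed
  then have mem: "(\<lambda>i. s_lat L * \<e> 1 i) \<in> L" by (simp add: s_lat_eq)
  moreover have "(\<lambda>i. s_lat L * \<e> 1 i) \<in> graver_basis L" if "\<exists>u\<in>L. coord_sum u \<noteq> 0"
  proof (rule smult_unitvec_in_graver_basis[OF mem])
    have "\<not> ?M \<subseteq> {0}" using that Sym_invariant_coord_sum_image[OF assms] by auto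
    then have "Gcd ?M \<noteq> 0" by simp
    with Gcd_int_greater_eq_0[of ?M] show "s_lat L > 0"
      unfolding s_lat_eq by linarith
    show "s_lat L dvd d" if "(\<lambda>i. d * \<e> 1 i) \<in> L" for d
      using that by (simp add: s_lat_eq Gcd_dvd)
  qed
  ultimately show ?thesis by blast
qed

end
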